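(* Let $g:[0,1]\to[0,1]$ be increasing with $g(0)=0$, $g(1)=1$, let $\mathbb P$ be a probability measure, $\delta>0$, and $\phi$ as in the context. For every $X\in\mathcal X$, $$\sup_{\mathbb Q\in\mathcal P_\phi(\mathbb P,\delta)}\rho^{\mathbb Q}_g(X)\le\rho^{\mathbb P}_{g\circ g_{\phi,\delta}}(X).$$ Moreover, if $\phi:[0,\infty)\to\mathbb R$ is strictly convex with $\lim_{x\to\infty}\phi(x)/x=\infty$ and $g$ is right-continuous on $[0,1)$, then $$\lim_{\delta\downarrow0}\sup_{\mathbb Q\in\mathcal P_\phi(\mathbb P,\delta)}\rho^{\mathbb Q}_g(X)=\lim_{\delta\downarrow0}\rho^{\mathbb P}_{g\circ g_{\phi,\delta}}(X)=\rho^{\mathbb P}_g(X).$$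
   Context: $\mathcal X$ is the set of bounded random variables on $(\Omega,\mathcal F)$. For increasing $h:[0,1]\to[0,1]$ with $h(0)=0$, $h(1)=1$ and a probability $\mathbb Q$, the distortion risk measure is $\rho^{\mathbb Q}_h(X)=\int_0^\infty h(\mathbb Q(X>x))\,\mathrm dx+\int_{-\infty}^0\big(h(\mathbb Q(X>x))-1\big)\,\mathrm dx$. $\phi:[0,\infty)\to\mathbb R\cup\{\infty\}$ convex with $\phi(1)=0$, $\phi(0)=\lim_{x\downarrow0}\phi(x)$; $D_\phi(\mathbb Q\|\mathbb P)=\mathbb E^{\mathbb P}[\phi(\mathrm d\mathbb Q/\mathrm d\mathbb P)]$; $\mathcal P_\phi(\mathbb P,\delta)=\{\mathbb Q\ll\mathbb P: D_\phi(\mathbb Q\|\mathbb P)\le\delta\}$. $g_{\phi,\delta}(0)=0$, $g_{\phi,\delta}(1)=1$, and $g_{\phi,\delta}(x)=\sup\{t\in[x,1]: x\phi(t/x)+(1-x)\phi((1-t)/(1-x))\le\delta\}$ for $x\in(0,1)$. *)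

theory Defs
  imports "HOL-Probability.Probability"
begin

definition distortion_risk :: "(real \<Rightarrow> real) \<Rightarrow> 'a measure \<Rightarrow> ('a \<Rightarrow> real) \<Rightarrow> real" where
  "distortion_risk h Q X =
     (LINT x:{0..}|lborel. h (measure Q {\<omega> \<in> space Q. X \<omega> > x}))
   + (LINT x:{..0}|lborel. h (measure Q {\<omega> \<in> space Q. X \<omega> > x}) - 1)"

definition convex_ereal_nonneg :: "(real \<Rightarrow> ereal) \<Rightarrow> bool" where
  "convex_ereal_nonneg \<phi> \<longleftrightarrow>
     (\<forall>x\<ge>0. \<forall>y\<ge>0. \<forall>t\<in>{0..1}. \<phi> (t * x + (1 - t) * y) \<le> ereal t * \<phi> x + ereal (1 - t) * \<phi> y)"

definition strictly_convex_ereal_nonneg :: "(real \<Rightarrow> ereal) \<Rightarrow> bool" where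
  "strictly_convex_ereal_nonneg \<phi> \<longleftrightarrow>
     (\<forall>x\<ge>0. \<forall>y\<ge>0. x \<noteq> y \<longrightarrow> (\<forall>t\<in>{0<..<1}. \<phi> (t * x + (1 - t) * y) < ereal t * \<phi> x + ereal (1 - t) * \<phi> y))"

definition admissible_phi :: "(real \<Rightarrow> ereal) \<Rightarrow> bool" where
  "admissible_phi \<phi> \<longleftrightarrow>
     (\<forall>x\<ge>0. \<phi> x \<noteq> -\<infinity>) \<and> convex_ereal_nonneg \<phi> \<and> \<phi> 1 = 0 \<and> (\<phi> \<longlongrightarrow> \<phi> 0) (at_right 0)"

text \<open>phi-divergence D_phi(Q||P) = E^P[phi(dQ/dP)], as positive part minus negative part.\<close>
definition phi_div :: "(real \<Rightarrow> ereal) \<Rightarrow> 'a measure \<Rightarrow> 'a measure \<Rightarrow> ereal" where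
  "phi_div \<phi> Q P =
     enn2ereal (\<integral>\<^sup>+\<omega>. e2ennreal (max 0 (\<phi> (enn2real (RN_deriv P Q \<omega>)))) \<partial>P)
   - enn2ereal (\<integral>\<^sup>+\<omega>. e2ennreal (max 0 (- \<phi> (enn2real (RN_deriv P Q \<omega>)))) \<partial>P)"

definition phi_ball :: "(real \<Rightarrow> ereal) \<Rightarrow> 'a measure \<Rightarrow> real \<Rightarrow> 'a measure set" where
  "phi_ball \<phi> P \<delta> = {Q. prob_space Q \<and> sets Q = sets P \<and> absolutely_continuous P Q
                          \<and> phi_div \<phi> Q P \<le> ereal \<delta>}"

definition g_phi :: "(real \<Rightarrow> ereal) \<Rightarrow> real \<Rightarrow> real \<Rightarrow> real" where
  "g_phi \<phi> \<delta> x =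
     (if x = 0 then 0 else if x = 1 then 1 else
      Sup {t \<in> {x..1}. ereal x * \<phi> (t / x) + ereal (1 - x) * \<phi> ((1 - t) / (1 - x)) \<le> ereal \<delta>})"

definition distortion_fun :: "(real \<Rightarrow> real) \<Rightarrow> bool" where
  "distortion_fun g \<longleftrightarrow> mono_on {0..1} g \<and> g ` {0..1} \<subseteq> {0..1} \<and> g 0 = 0 \<and> g 1 = 1"

end

theory Submission
  imports Defs
begin

text \<open>
  For Q in the divergence ball and an event A with p = P(A) and q = Q(A), Jensen's inequality
  for the density dQ/dP, conditioned on A and on its complement, gives the data-processing
  inequality D_phi(Bernoulli q || Bernoulli p) <= D_phi(Q || P) <= delta, that is
  q <= g_{phi,delta}(p). Applied to the events {X > x}, this bounds the g-distorted survival
  function of X under Q by the (g o g_{phi,delta})-distorted one under P, and integrating gives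
  the inequality. Since P lies in every ball, rho^P_g(X) <= sup <= rho^P_{g o g_{phi,delta}}(X).
  If phi is finite and strictly convex, D_phi(Bernoulli t || Bernoulli x) > 0 for t > x, so
  g_{phi,delta}(x) decreases to x as delta decreases to 0; right-continuity of g and dominated
  convergence then give both limits.
\<close>

section \<open>Convex functions and Jensen's inequality\<close>

lemma convex_on_supporting_line:
  fixes f :: "real \<Rightarrow> real"
  assumes f: "convex_on D f" and a: "a \<in> D" "a < c" and b: "b \<in> D" "c < b"
  obtains s where "\<And>z. z \<in> D \<Longrightarrow> f c + s * (z - c) \<le> f z"
proof -
  have slope: "(f z - f c) / (z - c) \<le> (f w - f c) / (w - c)" if "z \<in> D" "z < c" "w \<in> D" "c < w" for z w
    using convex_on_slope_le[OF f that(1) that(3), of c] that by (smt (verit, ccfv_SIG) minus_divide_divide)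
  define s where "s = (SUP z \<in> {z \<in> D. z < c}. (f z - f c) / (z - c))"
  have "f c + s * (z - c) \<le> f z" if z: "z \<in> D" for z
  proof (cases z c rule: linorder_cases)
    case less
    have "(f z - f c) / (z - c) \<le> s"
      unfolding s_def using z less slope[OF _ _ b] by (intro cSUP_upper bdd_aboveI2) auto
    then show ?thesis using less by (simp add: divide_le_eq algebra_simps)
  next
    case greater
    have "s \<le> (f z - f c) / (z - c)"
      unfolding s_def using a slope[OF _ _ z greater] by (intro cSUP_least) auto
    then show ?thesis using greater by (simp add: le_divide_eq algebra_simps)
  qed simp
  then show thesis by (rule that)
qed

lemma (in prob_space) AE_eq_expectation_one_sided:
  fixes Z :: "'a \<Rightarrow> real"
  assumes Z: "integrable M Z"
    and side: "(AE x in M. expectation Z \<le> Z x) \<or> (AE x in M. Z x \<le> expectation Z)"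
  shows "AE x in M. Z x = expectation Z"
  using side
proof
  assume "AE x in M. expectation Z \<le> Z x"
  then have "AE x in M. Z x - expectation Z = 0"
    using Z by (subst integral_nonneg_eq_0_iff_AE[symmetric]) (auto simp: prob_space)
  then show ?thesis by auto
next
  assume "AE x in M. Z x \<le> expectation Z"
  then have "AE x in M. expectation Z - Z x = 0"
    using Z by (subst integral_nonneg_eq_0_iff_AE[symmetric]) (auto simp: prob_space)
  then show ?thesis by auto
qed

lemma (in prob_space) jensens_inequality_convex_set:
  fixes f :: "real \<Rightarrow> real"
  assumes f: "convex_on D f" and Z: "integrable M Z" "AE x in M. Z x \<in> D"
    and fZ: "integrable M (\<lambda>x. f (Z x))"
  shows "expectation Z \<in> D" "f (expectation Z) \<le> expectation (\<lambda>x. f (Z x))"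
proof -
  define m where "m = expectation Z"
  have "m \<in> D \<and> f m \<le> expectation (\<lambda>x. f (Z x))"
  proof (cases "\<exists>a\<in>D. \<exists>b\<in>D. a < m \<and> m < b")
    case True
    then obtain a b where ab: "a \<in> D" "b \<in> D" "a < m" "m < b" by blast
    have "m \<in> D"
      using atMostAtLeast_subset_convex[OF convex_on_imp_convex[OF f] ab(1,2)] ab by auto
    obtain s where s: "\<And>z. z \<in> D \<Longrightarrow> f m + s * (z - m) \<le> f z"
      using convex_on_supporting_line[OF f ab(1,3) ab(2,4)] by blast
    have "f m = expectation (\<lambda>x. (f m - s * m) + s * Z x)"
      using Z(1) by (simp add: prob_space m_def algebra_simps)
    also have "\<dots> \<le> expectation (\<lambda>x. f (Z x))"
    proof (rule integral_mono_AE[OF _ fZ])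
      show "integrable M (\<lambda>x. (f m - s * m) + s * Z x)"
        using Z(1) by simp
      show "AE x in M. (f m - s * m) + s * Z x \<le> f (Z x)"
        using Z(2) by eventually_elim (use s in \<open>force simp: algebra_simps\<close>)
    qed
    finally show ?thesis using \<open>m \<in> D\<close> by simp
  next
    case False
    then have "(\<forall>d\<in>D. m \<le> d) \<or> (\<forall>d\<in>D. d \<le> m)"
      by (meson not_le)
    then have "(AE x in M. m \<le> Z x) \<or> (AE x in M. Z x \<le> m)"
    proof
      assume "\<forall>d\<in>D. m \<le> d"
      with Z(2) show ?thesis
        by (intro disjI1) (auto elim: eventually_mono)
    next
      assume "\<forall>d\<in>D. d \<le> m"
      with Z(2) show ?thesis
        by (intro disjI2) (auto elim: eventually_mono)
    qed
    then have Zm: "AE x in M. Z x = m"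
      using AE_eq_expectation_one_sided[OF Z(1)] by (simp add: m_def)
    have "AE x in M. m \<in> D"
      using Zm Z(2) by eventually_elim simp
    then have "m \<in> D" by simp
    moreover have "expectation (\<lambda>x. f (Z x)) = expectation (\<lambda>x. f m)"
      using Zm by (intro integral_cong_AE) (auto simp: borel_measurable_integrable[OF fZ])
    ultimately show ?thesis by (simp add: prob_space)
  qed
  then show "expectation Z \<in> D" "f (expectation Z) \<le> expectation (\<lambda>x. f (Z x))"
    by (auto simp: m_def)
qed

lemma conditional_jensens_inequality:
  fixes f :: "real \<Rightarrow> real" and Z :: "'a \<Rightarrow> real"
  assumes f: "convex_on D f" and A: "A \<in> sets M" "0 < measure M A"
    and Z: "integrable M Z" "AE x in M. Z x \<in> D" and fZ: "integrable M (\<lambda>x. f (Z x))"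
  shows "(LINT x:A|M. Z x) / measure M A \<in> D"
    and "measure M A * f ((LINT x:A|M. Z x) / measure M A) \<le> (LINT x:A|M. f (Z x))"
proof -
  txt \<open>Apply Jensen to the conditional law given A, realised as a density.\<close>
  define \<mu> where "\<mu> = measure M A"
  define w where "w = (\<lambda>x. indicator A x / \<mu>)"
  define N where "N = density M (\<lambda>x. ennreal (w x))"
  have "emeasure M A \<noteq> \<infinity>"
    using A(2) by (auto simp: measure_def)
  then have \<mu>: "0 < \<mu>" "emeasure M A = ennreal \<mu>"
    using A(2) by (simp_all add: \<mu>_def emeasure_eq_ennreal_measure)
  have w[measurable]: "w \<in> borel_measurable M"
    using A unfolding w_def by measurable
  have w0: "\<And>x. 0 \<le> w x"
    using \<mu> by (simp add: w_def)
  have "emeasure N (space N) = (\<integral>\<^sup>+x. ennreal (1 / \<mu>) * indicator A x \<partial>M)"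
    unfolding N_def using w by (subst emeasure_density) (auto simp: w_def intro!: nn_integral_cong split: split_indicator)
  also have "\<dots> = 1"
    using A \<mu> by (simp add: nn_integral_cmult_indicator ennreal_mult'[symmetric])
  finally interpret N: prob_space N
    by (intro prob_spaceI)
  have integral_N: "N.expectation h = (LINT x:A|M. h x) / \<mu>" if "integrable M h" for h
    unfolding N_def set_lebesgue_integral_def using that w w0
    by (subst integral_density) (auto simp: w_def)
  have integrable_N: "integrable N h" if "integrable M h" for h :: "'a \<Rightarrow> real"
    unfolding N_def using that w w0 integrable_mult_indicator[OF A(1) that]
    by (subst integrable_density) (auto simp: w_def)
  have "AE x in N. Z x \<in> D"
    unfolding N_def using Z(2) w by (subst AE_density) auto
  from N.jensens_inequality_convex_set[OF f integrable_N[OF Z(1)] this integrable_N[OF fZ]]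
  show "(LINT x:A|M. Z x) / measure M A \<in> D"
    and "measure M A * f ((LINT x:A|M. Z x) / measure M A) \<le> (LINT x:A|M. f (Z x))"
    unfolding integral_N[OF Z(1)] integral_N[OF fZ] \<mu>_def[symmetric]
    using \<mu>(1) by (simp_all add: le_divide_eq mult.commute)
qed

section \<open>The divergence generator\<close>

definition phi_dom :: "(real \<Rightarrow> ereal) \<Rightarrow> real set" where
  "phi_dom \<phi> = {x. 0 \<le> x \<and> \<phi> x \<noteq> \<infinity>}"

text \<open>Outside phi_dom the real part takes the junk value 0.\<close>

definition phi_real :: "(real \<Rightarrow> ereal) \<Rightarrow> real \<Rightarrow> real" where
  "phi_real \<phi> x = real_of_ereal (\<phi> x)"

lemma admissible_phiD:
  assumes "admissible_phi \<phi>"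
  shows "\<phi> 1 = 0" and "0 \<le> x \<Longrightarrow> \<phi> x \<noteq> -\<infinity>"
    and "\<lbrakk>0 \<le> x; 0 \<le> y; 0 \<le> t; t \<le> 1\<rbrakk> \<Longrightarrow>
      \<phi> (t * x + (1 - t) * y) \<le> ereal t * \<phi> x + ereal (1 - t) * \<phi> y"
  using assms unfolding admissible_phi_def convex_ereal_nonneg_def by auto

lemma phi_eq_phi_real: "admissible_phi \<phi> \<Longrightarrow> x \<in> phi_dom \<phi> \<Longrightarrow> \<phi> x = ereal (phi_real \<phi> x)"
  unfolding phi_dom_def phi_real_def using admissible_phiD(2)[of \<phi> x] by (cases "\<phi> x") auto

lemma one_in_phi_dom: "admissible_phi \<phi> \<Longrightarrow> 1 \<in> phi_dom \<phi>"
  unfolding phi_dom_def using admissible_phiD(1)[of \<phi>] by auto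

lemma phi_real_one: "admissible_phi \<phi> \<Longrightarrow> phi_real \<phi> 1 = 0"
  unfolding phi_real_def using admissible_phiD(1)[of \<phi>] by auto

lemma phi_dom_nonneg: "x \<in> phi_dom \<phi> \<Longrightarrow> 0 \<le> x"
  unfolding phi_dom_def by simp

lemma phi_convex_combination:
  assumes \<phi>: "admissible_phi \<phi>" and xy: "x \<in> phi_dom \<phi>" "y \<in> phi_dom \<phi>" and t: "0 \<le> t" "t \<le> 1"
  shows "t * x + (1 - t) * y \<in> phi_dom \<phi>"
    and "phi_real \<phi> (t * x + (1 - t) * y) \<le> t * phi_real \<phi> x + (1 - t) * phi_real \<phi> y"
proof -
  have "\<phi> (t * x + (1 - t) * y) \<le> ereal t * \<phi> x + ereal (1 - t) * \<phi> y"
    using admissible_phiD(3)[OF \<phi> _ _ t] xy by (simp add: phi_dom_nonneg)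
  also have "\<dots> = ereal (t * phi_real \<phi> x + (1 - t) * phi_real \<phi> y)"
    using phi_eq_phi_real[OF \<phi> xy(1)] phi_eq_phi_real[OF \<phi> xy(2)] by simp
  finally have le: "\<phi> (t * x + (1 - t) * y) \<le> ereal (t * phi_real \<phi> x + (1 - t) * phi_real \<phi> y)" .
  moreover have "0 \<le> t * x + (1 - t) * y"
    using xy t by (simp add: phi_dom_nonneg)
  ultimately show dom: "t * x + (1 - t) * y \<in> phi_dom \<phi>"
    by (auto simp: phi_dom_def)
  show "phi_real \<phi> (t * x + (1 - t) * y) \<le> t * phi_real \<phi> x + (1 - t) * phi_real \<phi> y"
    using le by (simp add: phi_eq_phi_real[OF \<phi> dom])
qed

lemma convex_on_phi_real:
  assumes \<phi>: "admissible_phi \<phi>"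
  shows "convex_on (phi_dom \<phi>) (phi_real \<phi>)"
proof (rule convex_onI)
  show "convex (phi_dom \<phi>)"
  proof (rule convexI)
    fix x y and u v :: real
    assume "x \<in> phi_dom \<phi>" "y \<in> phi_dom \<phi>" "0 \<le> u" "0 \<le> v" "u + v = 1"
    moreover from this have "v = 1 - u" by simp
    ultimately show "u *\<^sub>R x + v *\<^sub>R y \<in> phi_dom \<phi>"
      using phi_convex_combination(1)[OF \<phi>, of x y u] by simp
  qed
  fix t x y :: real assume "0 < t" "t < 1" "x \<in> phi_dom \<phi>" "y \<in> phi_dom \<phi>"
  then show "phi_real \<phi> ((1 - t) *\<^sub>R x + t *\<^sub>R y) \<le> (1 - t) * phi_real \<phi> x + t * phi_real \<phi> y"
    using phi_convex_combination(2)[OF \<phi>, of x y "1 - t"] by simp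
qed

lemma phi_real_toward_one:
  assumes \<phi>: "admissible_phi \<phi>" and u: "u \<in> phi_dom \<phi>" and w: "0 \<le> w" "w \<le> 1"
  shows "w * u + (1 - w) \<in> phi_dom \<phi>" and "phi_real \<phi> (w * u + (1 - w)) \<le> w * phi_real \<phi> u"
  using phi_convex_combination[OF \<phi> u one_in_phi_dom[OF \<phi>] w] by (simp_all add: phi_real_one[OF \<phi>])

text \<open>
  The perspective (a, s) |-> a * phi(s / a) vanishes on the diagonal; moving (a, s) towards (s, s),
  to the point l * (a, s) + (1 - l) * (s, s), scales it by at most l.
\<close>

lemma phi_real_perspective_toward_diagonal:
  assumes \<phi>: "admissible_phi \<phi>" and a: "0 < a" and s: "s / a \<in> phi_dom \<phi>"
    and l: "0 \<le> l" "l \<le> 1" and b: "0 < l * a + (1 - l) * s"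
  shows "s / (l * a + (1 - l) * s) \<in> phi_dom \<phi>"
    and "(l * a + (1 - l) * s) * phi_real \<phi> (s / (l * a + (1 - l) * s)) \<le> l * (a * phi_real \<phi> (s / a))"
proof -
  define b where "b = l * a + (1 - l) * s"
  define w where "w = l * a / b"
  have "0 \<le> s"
    using phi_dom_nonneg[OF s] a by (simp add: zero_le_divide_iff)
  then have w: "0 \<le> w" "w \<le> 1"
    using a b l by (auto simp: w_def b_def)
  have b0: "0 < b"
    using b by (simp add: b_def)
  have "w * (s / a) + (1 - w) = (l * s + (b - l * a)) / b"
    using a b0 by (simp add: w_def field_simps)
  also have "l * s + (b - l * a) = s"
    by (simp add: b_def algebra_simps)
  finally have "s / b = w * (s / a) + (1 - w)" ..
  with phi_real_toward_one[OF \<phi> s w]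
  have dom: "s / b \<in> phi_dom \<phi>" and le: "phi_real \<phi> (s / b) \<le> w * phi_real \<phi> (s / a)"
    by simp_all
  have "b * phi_real \<phi> (s / b) \<le> b * (w * phi_real \<phi> (s / a))"
    using le b by (simp add: b_def)
  also have "\<dots> = l * (a * phi_real \<phi> (s / a))"
    using b by (simp add: w_def b_def)
  finally show "s / (l * a + (1 - l) * s) \<in> phi_dom \<phi>"
    and "(l * a + (1 - l) * s) * phi_real \<phi> (s / (l * a + (1 - l) * s)) \<le> l * (a * phi_real \<phi> (s / a))"
    using dom by (simp_all add: b_def)
qed

lemma convex_phi_sublevel:
  assumes \<phi>: "admissible_phi \<phi>"
  shows "convex {x. 0 \<le> x \<and> \<phi> x \<le> c}"
proof (cases c)
  case (real r)
  show ?thesis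
  proof (rule convexI)
    fix x y and u v :: real
    assume x: "x \<in> {x. 0 \<le> x \<and> \<phi> x \<le> c}" and y: "y \<in> {x. 0 \<le> x \<and> \<phi> x \<le> c}"
      and uv: "0 \<le> u" "0 \<le> v" "u + v = 1"
    then have v: "v = 1 - u" by simp
    have "\<phi> (u * x + (1 - u) * y) \<le> ereal u * \<phi> x + ereal (1 - u) * \<phi> y"
      using admissible_phiD(3)[OF \<phi>, of x y u] x y uv by simp
    also have "\<dots> \<le> ereal u * c + ereal (1 - u) * c"
      using x y uv v by (intro add_mono ereal_mult_left_mono) auto
    also have "\<dots> = c"
      using real by (simp add: algebra_simps)
    finally show "u *\<^sub>R x + v *\<^sub>R y \<in> {x. 0 \<le> x \<and> \<phi> x \<le> c}"
      using x y uv v by simp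
  qed
next
  case PInf
  then have "{x. 0 \<le> x \<and> \<phi> x \<le> c} = {0..}"
    by auto
  then show ?thesis by simp
next
  case MInf
  then have "{x. 0 \<le> x \<and> \<phi> x \<le> c} = {}"
    using admissible_phiD(2)[OF \<phi>] by auto
  then show ?thesis by (simp only: convex_empty)
qed

lemma borel_measurable_phi_comp:
  assumes \<phi>: "admissible_phi \<phi>" and Z: "Z \<in> borel_measurable M" and Z0: "\<And>x. 0 \<le> Z x"
  shows "(\<lambda>x. \<phi> (Z x)) \<in> borel_measurable M"
proof -
  have "(\<lambda>x. if 0 \<le> x then \<phi> x else 0) \<in> borel_measurable borel"
  proof (rule borel_measurableI_le)
    fix c :: ereal
    have "{x. 0 \<le> x \<and> \<phi> x \<le> c} \<in> sets borel"
      using convex_phi_sublevel[OF \<phi>] is_interval_convex_1 real_interval_borel_measurable by blast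
    moreover have "{x \<in> space borel. (if 0 \<le> x then \<phi> x else 0) \<le> c}
        = {x. 0 \<le> x \<and> \<phi> x \<le> c} \<union> (if 0 \<le> c then {..<0} else {})"
      by auto
    ultimately show "{x \<in> space borel. (if 0 \<le> x then \<phi> x else 0) \<le> c} \<in> sets borel"
      by auto
  qed
  from measurable_compose[OF Z this] show ?thesis
    using Z0 by simp
qed

lemma phi_real_affine_minorant:
  assumes \<phi>: "admissible_phi \<phi>"
  obtains \<alpha> \<beta> where "\<And>z. z \<in> phi_dom \<phi> \<Longrightarrow> \<alpha> + \<beta> * z \<le> phi_real \<phi> z"
proof (cases "phi_dom \<phi> = {1}")
  case True
  then show thesis
    using phi_real_one[OF \<phi>] by (intro that[of 0 0]) auto
next
  case False
  then obtain d where d: "d \<in> phi_dom \<phi>" "d \<noteq> 1"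
    using one_in_phi_dom[OF \<phi>] by blast
  define c where "c = (1 + d) / 2"
  obtain s where s: "\<And>z. z \<in> phi_dom \<phi> \<Longrightarrow> phi_real \<phi> c + s * (z - c) \<le> phi_real \<phi> z"
  proof -
    consider "d < c" "c < 1" | "1 < c" "c < d"
      using d(2) by (fastforce simp: c_def)
    then show thesis
    proof cases
      case 1
      then show thesis
        using convex_on_supporting_line[OF convex_on_phi_real[OF \<phi>] d(1) 1(1) one_in_phi_dom[OF \<phi>] 1(2)] that
        by blast
    next
      case 2
      then show thesis
        using convex_on_supporting_line[OF convex_on_phi_real[OF \<phi>] one_in_phi_dom[OF \<phi>] 2(1) d(1) 2(2)] that
        by blast
    qed
  qed
  show thesis
    using s by (intro that[of "phi_real \<phi> c - s * c" s]) (auto simp: algebra_simps)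
qed

section \<open>The divergence ball\<close>

lemma e2ennreal_max_0_ereal: "e2ennreal (max 0 (ereal r)) = ennreal r"
  by (cases "0 \<le> r") (auto simp: max_def ennreal_neg)

lemma nn_integral_neg_phi_finite:
  assumes M: "finite_measure M" and \<phi>: "admissible_phi \<phi>"
    and Z: "integrable M Z" "\<And>x. 0 \<le> Z x"
  shows "(\<integral>\<^sup>+x. e2ennreal (max 0 (- \<phi> (Z x))) \<partial>M) < \<infinity>"
proof -
  obtain \<alpha> \<beta> where minorant: "\<And>z. z \<in> phi_dom \<phi> \<Longrightarrow> \<alpha> + \<beta> * z \<le> phi_real \<phi> z"
    using phi_real_affine_minorant[OF \<phi>] by blast
  have "(\<integral>\<^sup>+x. e2ennreal (max 0 (- \<phi> (Z x))) \<partial>M) \<le> (\<integral>\<^sup>+x. ennreal (\<bar>\<alpha>\<bar> + \<bar>\<beta>\<bar> * Z x) \<partial>M)"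
  proof (rule nn_integral_mono)
    fix x
    show "e2ennreal (max 0 (- \<phi> (Z x))) \<le> ennreal (\<bar>\<alpha>\<bar> + \<bar>\<beta>\<bar> * Z x)"
    proof (cases "Z x \<in> phi_dom \<phi>")
      case True
      have "- \<beta> * Z x \<le> \<bar>\<beta>\<bar> * Z x"
        using Z(2) by (intro mult_right_mono) auto
      then have "- phi_real \<phi> (Z x) \<le> \<bar>\<alpha>\<bar> + \<bar>\<beta>\<bar> * Z x"
        using minorant[OF True] by linarith
      then show ?thesis
        using True by (simp add: phi_eq_phi_real[OF \<phi>] e2ennreal_max_0_ereal ennreal_leI)
    next
      case False
      then show ?thesis
        using Z(2) by (simp add: phi_dom_def)
    qed
  qed
  also have "\<dots> < \<infinity>"
  proof -
    interpret finite_measure M by (rule M)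
    have "integrable M (\<lambda>x. \<bar>\<alpha>\<bar> + \<bar>\<beta>\<bar> * Z x)"
      using Z(1) by simp
    then show ?thesis
      using Z(2) by (subst nn_integral_eq_integral) auto
  qed
  finally show ?thesis .
qed

lemma integrable_phi_comp:
  assumes M: "finite_measure M" and \<phi>: "admissible_phi \<phi>"
    and Z: "integrable M Z" "\<And>x. 0 \<le> Z x"
    and pos: "(\<integral>\<^sup>+x. e2ennreal (max 0 (\<phi> (Z x))) \<partial>M) \<noteq> \<infinity>"
  shows "AE x in M. Z x \<in> phi_dom \<phi>"
    and "integrable M (\<lambda>x. phi_real \<phi> (Z x))"
    and "enn2ereal (\<integral>\<^sup>+x. e2ennreal (max 0 (\<phi> (Z x))) \<partial>M)
         - enn2ereal (\<integral>\<^sup>+x. e2ennreal (max 0 (- \<phi> (Z x))) \<partial>M)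
       = ereal (\<integral>x. phi_real \<phi> (Z x) \<partial>M)"
proof -
  have Zm: "Z \<in> borel_measurable M"
    using Z(1) by auto
  have [measurable]: "(\<lambda>x. \<phi> (Z x)) \<in> borel_measurable M"
    by (rule borel_measurable_phi_comp[OF \<phi> Zm Z(2)])
  have "AE x in M. e2ennreal (max 0 (\<phi> (Z x))) \<noteq> \<infinity>"
    using pos by (intro nn_integral_PInf_AE) auto
  then show dom: "AE x in M. Z x \<in> phi_dom \<phi>"
    by eventually_elim (use Z(2) in \<open>auto simp: phi_dom_def\<close>)
  have pos_eq: "(\<integral>\<^sup>+x. ennreal (phi_real \<phi> (Z x)) \<partial>M) = (\<integral>\<^sup>+x. e2ennreal (max 0 (\<phi> (Z x))) \<partial>M)"
    using dom by (intro nn_integral_cong_AE) (auto elim!: eventually_mono simp: phi_eq_phi_real[OF \<phi>] e2ennreal_max_0_ereal)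
  have neg_eq: "(\<integral>\<^sup>+x. ennreal (- phi_real \<phi> (Z x)) \<partial>M) = (\<integral>\<^sup>+x. e2ennreal (max 0 (- \<phi> (Z x))) \<partial>M)"
    using dom by (intro nn_integral_cong_AE) (auto elim!: eventually_mono simp: phi_eq_phi_real[OF \<phi>] e2ennreal_max_0_ereal)
  have "(\<lambda>x. phi_real \<phi> (Z x)) \<in> borel_measurable M"
    unfolding phi_real_def by measurable
  then show int: "integrable M (\<lambda>x. phi_real \<phi> (Z x))"
    unfolding real_integrable_def using pos nn_integral_neg_phi_finite[OF M \<phi> Z] pos_eq neg_eq by auto
  obtain r q where "(\<integral>\<^sup>+x. ennreal (phi_real \<phi> (Z x)) \<partial>M) = ennreal r"
    "(\<integral>\<^sup>+x. ennreal (- phi_real \<phi> (Z x)) \<partial>M) = ennreal q"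
    "0 \<le> r" "0 \<le> q" "(\<integral>x. phi_real \<phi> (Z x) \<partial>M) = r - q"
    using integrableE[OF int] by metis
  then show "enn2ereal (\<integral>\<^sup>+x. e2ennreal (max 0 (\<phi> (Z x))) \<partial>M)
         - enn2ereal (\<integral>\<^sup>+x. e2ennreal (max 0 (- \<phi> (Z x))) \<partial>M)
       = ereal (\<integral>x. phi_real \<phi> (Z x) \<partial>M)"
    by (simp add: pos_eq[symmetric] neg_eq[symmetric])
qed

lemma phi_ball_RN_deriv:
  assumes P: "prob_space P" and \<phi>: "admissible_phi \<phi>" and Q: "Q \<in> phi_ball \<phi> P \<delta>"
  defines "Z \<equiv> \<lambda>\<omega>. enn2real (RN_deriv P Q \<omega>)"
  shows "integrable P Z"
    and "A \<in> sets P \<Longrightarrow> (LINT \<omega>:A|P. Z \<omega>) = measure Q A"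
    and "AE \<omega> in P. Z \<omega> \<in> phi_dom \<phi>"
    and "integrable P (\<lambda>\<omega>. phi_real \<phi> (Z \<omega>))"
    and "(\<integral>\<omega>. phi_real \<phi> (Z \<omega>) \<partial>P) \<le> \<delta>"
proof -
  interpret P: prob_space P by (rule P)
  have "prob_space Q" and sQ: "sets Q = sets P" and ac: "absolutely_continuous P Q"
    and div: "phi_div \<phi> Q P \<le> ereal \<delta>"
    using Q unfolding phi_ball_def by auto
  then interpret Q: prob_space Q by simp
  note RN = P.RN_deriv_integrable[OF Q.sigma_finite_measure_axioms ac sQ]
    P.RN_deriv_integral[OF Q.sigma_finite_measure_axioms ac sQ]
  show intZ: "integrable P Z"
    using RN(1)[of "\<lambda>_. 1"] by (simp add: Z_def)
  show "(LINT \<omega>:A|P. Z \<omega>) = measure Q A" if "A \<in> sets P" for A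
    using RN(2)[of "indicator A"] that sQ by (simp add: Z_def set_lebesgue_integral_def mult.commute)
  have Z0: "\<And>\<omega>. 0 \<le> Z \<omega>"
    by (simp add: Z_def)
  define pos where "pos = (\<integral>\<^sup>+\<omega>. e2ennreal (max 0 (\<phi> (Z \<omega>))) \<partial>P)"
  define neg where "neg = (\<integral>\<^sup>+\<omega>. e2ennreal (max 0 (- \<phi> (Z \<omega>))) \<partial>P)"
  have "neg < \<infinity>"
    unfolding neg_def by (rule nn_integral_neg_phi_finite[OF P.finite_measure_axioms \<phi> intZ Z0])
  moreover have "enn2ereal pos - enn2ereal neg \<le> ereal \<delta>"
    using div by (simp add: phi_div_def pos_def neg_def Z_def)
  ultimately have "pos \<noteq> \<infinity>"
    by (auto simp: less_top[symmetric])
  note div_eq = integrable_phi_comp[OF P.finite_measure_axioms \<phi> intZ Z0 this[unfolded pos_def]]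
  show "AE \<omega> in P. Z \<omega> \<in> phi_dom \<phi>" and "integrable P (\<lambda>\<omega>. phi_real \<phi> (Z \<omega>))"
    by (fact div_eq(1), fact div_eq(2))
  show "(\<integral>\<omega>. phi_real \<phi> (Z \<omega>) \<partial>P) \<le> \<delta>"
    using div div_eq(3) by (simp add: phi_div_def Z_def)
qed

lemma self_in_phi_ball:
  assumes P: "prob_space P" and \<phi>: "admissible_phi \<phi>" and \<delta>: "0 \<le> \<delta>"
  shows "P \<in> phi_ball \<phi> P \<delta>"
proof -
  interpret P: prob_space P by (rule P)
  have "AE \<omega> in P. 1 = RN_deriv P P \<omega>"
    by (rule P.RN_deriv_unique) (auto simp: density_1)
  then have "AE \<omega> in P. \<phi> (enn2real (RN_deriv P P \<omega>)) = 0"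
    by eventually_elim (simp add: admissible_phiD(1)[OF \<phi>])
  then have "(\<integral>\<^sup>+\<omega>. e2ennreal (max 0 (\<phi> (enn2real (RN_deriv P P \<omega>)))) \<partial>P) = 0"
    and "(\<integral>\<^sup>+\<omega>. e2ennreal (max 0 (- \<phi> (enn2real (RN_deriv P P \<omega>)))) \<partial>P) = 0"
    by (subst nn_integral_cong_AE[where v="\<lambda>_. 0"]; auto elim!: eventually_mono)+
  then have "phi_div \<phi> P P = 0"
    by (simp add: phi_div_def)
  then show ?thesis
    using P \<delta> by (simp add: phi_ball_def absolutely_continuous_def)
qed

section \<open>The distortion function g_phi\<close>

text \<open>D_phi(Bernoulli t || Bernoulli x), the quantity constrained in the definition of g_phi.\<close>

definition bernoulli_phi_div :: "(real \<Rightarrow> ereal) \<Rightarrow> real \<Rightarrow> real \<Rightarrow> real" where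
  "bernoulli_phi_div \<phi> x t = x * phi_real \<phi> (t / x) + (1 - x) * phi_real \<phi> ((1 - t) / (1 - x))"

lemma bernoulli_phi_div_self: "admissible_phi \<phi> \<Longrightarrow> 0 < x \<Longrightarrow> x < 1 \<Longrightarrow> bernoulli_phi_div \<phi> x x = 0"
  unfolding bernoulli_phi_div_def by (simp add: phi_real_one)

lemma bernoulli_phi_div_nonneg:
  assumes \<phi>: "admissible_phi \<phi>" and x: "0 < x" "x < 1"
    and dom: "t / x \<in> phi_dom \<phi>" "(1 - t) / (1 - x) \<in> phi_dom \<phi>"
  shows "0 \<le> bernoulli_phi_div \<phi> x t"
proof -
  have "x * (t / x) + (1 - x) * ((1 - t) / (1 - x)) = 1"
    using x by simp
  then show ?thesis
    using phi_convex_combination(2)[OF \<phi> dom, of x] x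
    by (simp add: bernoulli_phi_div_def phi_real_one[OF \<phi>])
qed

lemma bernoulli_phi_div_mono_reference:
  assumes \<phi>: "admissible_phi \<phi>" and xy: "0 < x" "x < y" "y \<le> t" "y < 1"
    and dom: "t / x \<in> phi_dom \<phi>" "(1 - t) / (1 - x) \<in> phi_dom \<phi>"
  shows "t / y \<in> phi_dom \<phi>" and "(1 - t) / (1 - y) \<in> phi_dom \<phi>"
    and "bernoulli_phi_div \<phi> y t \<le> bernoulli_phi_div \<phi> x t"
proof -
  define l where "l = (t - y) / (t - x)"
  have l: "0 \<le> l" "l \<le> 1"
    using xy by (auto simp: l_def divide_simps)
  have "l * (t - x) = t - y"
    using xy by (simp add: l_def)
  then have y: "l * x + (1 - l) * t = y"
    by (simp add: algebra_simps)
  then have y': "l * (1 - x) + (1 - l) * (1 - t) = 1 - y"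
    by (simp add: algebra_simps)
  note left = phi_real_perspective_toward_diagonal[OF \<phi> _ dom(1) l, unfolded y]
  note right = phi_real_perspective_toward_diagonal[OF \<phi> _ dom(2) l, unfolded y']
  show "t / y \<in> phi_dom \<phi>" and "(1 - t) / (1 - y) \<in> phi_dom \<phi>"
    using left(1) right(1) xy by auto
  have "bernoulli_phi_div \<phi> y t \<le> l * bernoulli_phi_div \<phi> x t"
    using left(2) right(2) xy by (simp add: bernoulli_phi_div_def algebra_simps)
  also have "\<dots> \<le> bernoulli_phi_div \<phi> x t"
    using bernoulli_phi_div_nonneg[OF \<phi> _ _ dom] l xy by (intro mult_left_le_one_le) auto
  finally show "bernoulli_phi_div \<phi> y t \<le> bernoulli_phi_div \<phi> x t" .
qed

lemma bernoulli_phi_div_mono_target: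
  assumes \<phi>: "admissible_phi \<phi>" and xs: "0 < x" "x < s" "s \<le> t" "x < 1"
    and dom: "t / x \<in> phi_dom \<phi>" "(1 - t) / (1 - x) \<in> phi_dom \<phi>"
  shows "bernoulli_phi_div \<phi> x s \<le> bernoulli_phi_div \<phi> x t"
proof -
  define w where "w = (s - x) / (t - x)"
  have w: "0 \<le> w" "w \<le> 1"
    using xs by (auto simp: w_def divide_simps)
  have ws: "w * (t - x) = s - x"
    using xs by (simp add: w_def)
  have "w * (t / x) + (1 - w) = (x + w * (t - x)) / x"
    and "w * ((1 - t) / (1 - x)) + (1 - w) = ((1 - x) - w * (t - x)) / (1 - x)"
    using xs by (simp_all add: field_simps)
  then have "s / x = w * (t / x) + (1 - w)" and "(1 - s) / (1 - x) = w * ((1 - t) / (1 - x)) + (1 - w)"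
    unfolding ws by simp_all
  then have "phi_real \<phi> (s / x) \<le> w * phi_real \<phi> (t / x)"
    and "phi_real \<phi> ((1 - s) / (1 - x)) \<le> w * phi_real \<phi> ((1 - t) / (1 - x))"
    using phi_real_toward_one(2)[OF \<phi> dom(1) w] phi_real_toward_one(2)[OF \<phi> dom(2) w] by simp_all
  then have "x * phi_real \<phi> (s / x) \<le> x * (w * phi_real \<phi> (t / x))"
    and "(1 - x) * phi_real \<phi> ((1 - s) / (1 - x)) \<le> (1 - x) * (w * phi_real \<phi> ((1 - t) / (1 - x)))"
    using xs by (simp_all add: mult_left_mono)
  then have "bernoulli_phi_div \<phi> x s \<le> w * bernoulli_phi_div \<phi> x t"
    by (simp add: bernoulli_phi_div_def algebra_simps)
  also have "\<dots> \<le> bernoulli_phi_div \<phi> x t"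
    using bernoulli_phi_div_nonneg[OF \<phi> _ _ dom] w xs by (intro mult_left_le_one_le) auto
  finally show ?thesis .
qed

lemma bernoulli_phi_div_pos:
  assumes \<phi>: "admissible_phi \<phi>" and fin: "\<forall>x\<ge>0. \<phi> x \<noteq> \<infinity>"
    and sc: "strictly_convex_ereal_nonneg \<phi>" and xt: "0 < x" "x < t" "t \<le> 1"
  shows "0 < bernoulli_phi_div \<phi> x t"
proof -
  have dom: "t / x \<in> phi_dom \<phi>" "(1 - t) / (1 - x) \<in> phi_dom \<phi>"
    using fin xt by (auto simp: phi_dom_def)
  have "(1 - t) / (1 - x) < 1" and "1 < t / x"
    using xt by simp_all
  then have "t / x \<noteq> (1 - t) / (1 - x)"
    by linarith
  moreover have "x \<in> {0<..<1}"
    using xt by simp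
  ultimately have "\<phi> (x * (t / x) + (1 - x) * ((1 - t) / (1 - x)))
      < ereal x * \<phi> (t / x) + ereal (1 - x) * \<phi> ((1 - t) / (1 - x))"
    using sc phi_dom_nonneg[OF dom(1)] phi_dom_nonneg[OF dom(2)]
    unfolding strictly_convex_ereal_nonneg_def by blast
  moreover have "x * (t / x) + (1 - x) * ((1 - t) / (1 - x)) = 1"
    using xt by simp
  ultimately show ?thesis
    using admissible_phiD(1)[OF \<phi>]
    by (simp add: bernoulli_phi_div_def phi_eq_phi_real[OF \<phi> dom(1)] phi_eq_phi_real[OF \<phi> dom(2)])
qed

definition g_phi_feasible :: "(real \<Rightarrow> ereal) \<Rightarrow> real \<Rightarrow> real \<Rightarrow> real set" where
  "g_phi_feasible \<phi> \<delta> x =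
     {t \<in> {x..1}. ereal x * \<phi> (t / x) + ereal (1 - x) * \<phi> ((1 - t) / (1 - x)) \<le> ereal \<delta>}"

lemma g_phi_eq_Sup: "0 < x \<Longrightarrow> x < 1 \<Longrightarrow> g_phi \<phi> \<delta> x = Sup (g_phi_feasible \<phi> \<delta> x)"
  unfolding g_phi_def g_phi_feasible_def by simp

lemma g_phi_0 [simp]: "g_phi \<phi> \<delta> 0 = 0" and g_phi_1 [simp]: "g_phi \<phi> \<delta> 1 = 1"
  unfolding g_phi_def by simp_all

lemma mem_g_phi_feasible_iff:
  assumes \<phi>: "admissible_phi \<phi>" and x: "0 < x" "x < 1" and t: "x \<le> t" "t \<le> 1"
  shows "t \<in> g_phi_feasible \<phi> \<delta> x \<longleftrightarrow>
    t / x \<in> phi_dom \<phi> \<and> (1 - t) / (1 - x) \<in> phi_dom \<phi> \<and> bernoulli_phi_div \<phi> x t \<le> \<delta>"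
proof (cases "t / x \<in> phi_dom \<phi> \<and> (1 - t) / (1 - x) \<in> phi_dom \<phi>")
  case True
  then show ?thesis
    using t by (simp add: g_phi_feasible_def bernoulli_phi_div_def phi_eq_phi_real[OF \<phi>])
next
  case False
  have "0 \<le> t / x" "0 \<le> (1 - t) / (1 - x)"
    using x t by auto
  then have "\<phi> (t / x) \<noteq> -\<infinity>" "\<phi> ((1 - t) / (1 - x)) \<noteq> -\<infinity>"
    and "\<phi> (t / x) = \<infinity> \<or> \<phi> ((1 - t) / (1 - x)) = \<infinity>"
    using False admissible_phiD(2)[OF \<phi>] by (auto simp: phi_dom_def)
  then have infinite: "ereal x * \<phi> (t / x) + ereal (1 - x) * \<phi> ((1 - t) / (1 - x)) = \<infinity>"
    using x by (auto simp: ereal_mult_infty)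
  show ?thesis
    using False unfolding g_phi_feasible_def mem_Collect_eq infinite by auto
qed

lemma self_mem_g_phi_feasible:
  assumes "admissible_phi \<phi>" "0 < x" "x < 1" "0 \<le> \<delta>"
  shows "x \<in> g_phi_feasible \<phi> \<delta> x"
  using assms by (simp add: mem_g_phi_feasible_iff bernoulli_phi_div_self one_in_phi_dom)

lemma bdd_above_g_phi_feasible: "bdd_above (g_phi_feasible \<phi> \<delta> x)"
  unfolding g_phi_feasible_def by (rule bdd_aboveI[of _ 1]) auto

lemma le_g_phi: "0 < x \<Longrightarrow> x < 1 \<Longrightarrow> t \<in> g_phi_feasible \<phi> \<delta> x \<Longrightarrow> t \<le> g_phi \<phi> \<delta> x"
  using g_phi_eq_Sup cSup_upper[OF _ bdd_above_g_phi_feasible] by metis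

lemma g_phi_bounds:
  assumes \<phi>: "admissible_phi \<phi>" and \<delta>: "0 \<le> \<delta>" and x: "0 \<le> x" "x \<le> 1"
  shows "x \<le> g_phi \<phi> \<delta> x" and "g_phi \<phi> \<delta> x \<le> 1"
proof -
  have "x \<le> g_phi \<phi> \<delta> x \<and> g_phi \<phi> \<delta> x \<le> 1"
  proof (cases "x = 0 \<or> x = 1")
    case False
    then have x': "0 < x" "x < 1"
      using x by auto
    note self = self_mem_g_phi_feasible[OF \<phi> x' \<delta>]
    have "Sup (g_phi_feasible \<phi> \<delta> x) \<le> 1"
      using self by (intro cSup_least) (auto simp: g_phi_feasible_def)
    then show ?thesis
      using le_g_phi[OF x' self] g_phi_eq_Sup[OF x'] by simp
  qed auto
  then show "x \<le> g_phi \<phi> \<delta> x" and "g_phi \<phi> \<delta> x \<le> 1"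
    by simp_all
qed

lemma g_phi_feasible_mono:
  assumes \<phi>: "admissible_phi \<phi>" and xy: "0 < x" "x < y" "y \<le> t" "y < 1"
    and t: "t \<in> g_phi_feasible \<phi> \<delta> x"
  shows "t \<in> g_phi_feasible \<phi> \<delta> y"
proof -
  have t1: "x \<le> t" "t \<le> 1"
    using t by (auto simp: g_phi_feasible_def)
  with t have dom: "t / x \<in> phi_dom \<phi>" "(1 - t) / (1 - x) \<in> phi_dom \<phi>"
    and le: "bernoulli_phi_div \<phi> x t \<le> \<delta>"
    using xy by (simp_all add: mem_g_phi_feasible_iff[OF \<phi>])
  note shift = bernoulli_phi_div_mono_reference[OF \<phi> xy dom]
  show ?thesis
    using shift le xy t1 by (simp add: mem_g_phi_feasible_iff[OF \<phi>])
qed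

lemma g_phi_mono:
  assumes \<phi>: "admissible_phi \<phi>" and \<delta>: "0 \<le> \<delta>"
  shows "mono_on {0..1} (g_phi \<phi> \<delta>)"
proof (rule mono_onI)
  fix x y :: real
  assume x: "x \<in> {0..1}" and y: "y \<in> {0..1}" and xy: "x \<le> y"
  show "g_phi \<phi> \<delta> x \<le> g_phi \<phi> \<delta> y"
  proof (cases "x = 0 \<or> y = 1 \<or> x = y")
    case True
    then show ?thesis
      using g_phi_bounds(1)[OF \<phi> \<delta>, of y] g_phi_bounds(2)[OF \<phi> \<delta>, of x] x y by auto
  next
    case False
    then have x': "0 < x" "x < 1" "x < y" "y < 1"
      using x y xy by auto
    have "Sup (g_phi_feasible \<phi> \<delta> x) \<le> g_phi \<phi> \<delta> y"
    proof (rule cSup_least)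
      show "g_phi_feasible \<phi> \<delta> x \<noteq> {}"
        using self_mem_g_phi_feasible[OF \<phi> x'(1,2) \<delta>] by auto
    next
      fix t
      assume t: "t \<in> g_phi_feasible \<phi> \<delta> x"
      show "t \<le> g_phi \<phi> \<delta> y"
      proof (cases "t \<le> y")
        case True
        then show ?thesis
          using g_phi_bounds(1)[OF \<phi> \<delta>, of y] y by simp
      next
        case False
        then have "t \<in> g_phi_feasible \<phi> \<delta> y"
          using g_phi_feasible_mono[OF \<phi> x'(1,3) _ x'(4) t] by simp
        then show ?thesis
          using le_g_phi x' by simp
      qed
    qed
    then show ?thesis
      using g_phi_eq_Sup[OF x'(1,2)] by simp
  qed
qed

lemma distortion_fun_g_phi:
  assumes "admissible_phi \<phi>" "0 \<le> \<delta>"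
  shows "distortion_fun (g_phi \<phi> \<delta>)"
  unfolding distortion_fun_def
proof (intro conjI)
  show "g_phi \<phi> \<delta> ` {0..1} \<subseteq> {0..1}"
  proof (rule image_subsetI)
    fix x :: real
    assume "x \<in> {0..1}"
    then show "g_phi \<phi> \<delta> x \<in> {0..1}"
      using g_phi_bounds[OF assms, of x] by auto
  qed
qed (simp_all add: g_phi_mono[OF assms])

lemma distortion_fun_comp:
  assumes g: "distortion_fun g" and h: "distortion_fun h"
  shows "distortion_fun (g \<circ> h)"
  unfolding distortion_fun_def
proof (intro conjI)
  have hm: "mono_on {0..1} h" and hr: "h ` {0..1} \<subseteq> {0..1}"
    using h by (simp_all add: distortion_fun_def)
  have gm: "mono_on {0..1} g" and gr: "g ` {0..1} \<subseteq> {0..1}"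
    using g by (simp_all add: distortion_fun_def)
  show "mono_on {0..1} (g \<circ> h)"
  proof (rule mono_onI)
    fix x y :: real
    assume "x \<in> {0..1}" "y \<in> {0..1}" "x \<le> y"
    then show "(g \<circ> h) x \<le> (g \<circ> h) y"
      using mono_onD[OF hm] hr by (auto intro!: mono_onD[OF gm])
  qed
  show "(g \<circ> h) ` {0..1} \<subseteq> {0..1}"
    using gr hr by (auto simp: image_subset_iff)
qed (use g h in \<open>simp_all add: distortion_fun_def\<close>)

lemma g_phi_le:
  assumes \<phi>: "admissible_phi \<phi>" and fin: "\<forall>x\<ge>0. \<phi> x \<noteq> \<infinity>"
    and xs: "0 < x" "x < s" "s \<le> 1" and d: "0 \<le> d" "d < bernoulli_phi_div \<phi> x s"
  shows "g_phi \<phi> d x \<le> s"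
proof -
  have x1: "x < 1"
    using xs by simp
  have "Sup (g_phi_feasible \<phi> d x) \<le> s"
  proof (rule cSup_least)
    show "g_phi_feasible \<phi> d x \<noteq> {}"
      using self_mem_g_phi_feasible[OF \<phi> xs(1) x1 d(1)] by auto
  next
    fix t
    assume t: "t \<in> g_phi_feasible \<phi> d x"
    show "t \<le> s"
    proof (rule ccontr)
      assume "\<not> t \<le> s"
      moreover have "t \<le> 1" "x \<le> t"
        using t by (auto simp: g_phi_feasible_def)
      moreover have "t / x \<in> phi_dom \<phi>" "(1 - t) / (1 - x) \<in> phi_dom \<phi>"
        using fin xs x1 \<open>t \<le> 1\<close> \<open>x \<le> t\<close> by (auto simp: phi_dom_def)
      ultimately have "bernoulli_phi_div \<phi> x s \<le> bernoulli_phi_div \<phi> x t"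
        using bernoulli_phi_div_mono_target[OF \<phi> xs(1,2) _ x1] by simp
      moreover have "bernoulli_phi_div \<phi> x t \<le> d"
        using t \<open>t \<le> 1\<close> \<open>x \<le> t\<close> by (simp add: mem_g_phi_feasible_iff[OF \<phi> xs(1) x1])
      ultimately show False
        using d(2) by simp
    qed
  qed
  then show ?thesis
    using g_phi_eq_Sup[OF xs(1) x1] by simp
qed

lemma g_phi_tendsto:
  assumes \<phi>: "admissible_phi \<phi>" and fin: "\<forall>x\<ge>0. \<phi> x \<noteq> \<infinity>"
    and sc: "strictly_convex_ereal_nonneg \<phi>" and y: "0 \<le> y" "y \<le> 1"
  shows "((\<lambda>d. g_phi \<phi> d y) \<longlongrightarrow> y) (at_right 0)"
proof (cases "y = 0 \<or> y = 1")
  case True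
  then show ?thesis by auto
next
  case False
  then have y': "0 < y" "y < 1"
    using y by auto
  show ?thesis
  proof (rule order_tendstoI)
    fix a
    assume "a < y"
    have "eventually (\<lambda>d. y \<le> g_phi \<phi> d y) (at_right 0)"
      using eventually_at_right_less[of 0] by eventually_elim (simp add: g_phi_bounds(1)[OF \<phi> _ y])
    then show "eventually (\<lambda>d. a < g_phi \<phi> d y) (at_right 0)"
      by eventually_elim (use \<open>a < y\<close> in simp)
  next
    fix b
    assume "y < b"
    define s where "s = min ((y + b) / 2) 1"
    have s: "y < s" "s < b" "s \<le> 1"
      using \<open>y < b\<close> y' by (auto simp: s_def min_def)
    have "0 < bernoulli_phi_div \<phi> y s"
      by (rule bernoulli_phi_div_pos[OF \<phi> fin sc y'(1) s(1,3)])
    then have "eventually (\<lambda>d. d \<in> {0<..<bernoulli_phi_div \<phi> y s}) (at_right 0)"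
      by (rule eventually_at_right_real)
    then show "eventually (\<lambda>d. g_phi \<phi> d y < b) (at_right 0)"
    proof eventually_elim
      case (elim d)
      then have "g_phi \<phi> d y \<le> s"
        by (intro g_phi_le[OF \<phi> fin y'(1) s(1,3)]) auto
      then show ?case
        using s(2) by simp
    qed
  qed
qed

lemma comp_g_phi_tendsto:
  assumes \<phi>: "admissible_phi \<phi>" and fin: "\<forall>x\<ge>0. \<phi> x \<noteq> \<infinity>"
    and sc: "strictly_convex_ereal_nonneg \<phi>" and g: "\<forall>x\<in>{0..<1}. continuous (at_right x) g"
    and y: "0 \<le> y" "y \<le> 1"
  shows "((\<lambda>d. (g \<circ> g_phi \<phi> d) y) \<longlongrightarrow> g y) (at_right 0)"
proof (cases "y = 1")
  case True
  then show ?thesis by simp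
next
  case False
  then have "continuous (at y within {y..}) g"
    using g y by (simp add: at_within_Ici_at_right)
  moreover have "eventually (\<lambda>d. g_phi \<phi> d y \<in> {y..}) (at_right 0)"
    using eventually_at_right_less[of 0] by eventually_elim (simp add: g_phi_bounds(1)[OF \<phi> _ y])
  ultimately show ?thesis
    unfolding comp_def by (rule continuous_within_tendsto_compose[OF _ _ g_phi_tendsto[OF \<phi> fin sc y]])
qed

section \<open>Data processing for a two-cell partition\<close>

lemma phi_ball_bernoulli_phi_div_le:
  assumes P: "prob_space P" and \<phi>: "admissible_phi \<phi>" and Q: "Q \<in> phi_ball \<phi> P \<delta>"
    and A: "A \<in> sets P" "0 < measure P A" "measure P A < 1"
  shows "measure Q A / measure P A \<in> phi_dom \<phi>"
    and "(1 - measure Q A) / (1 - measure P A) \<in> phi_dom \<phi>"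
    and "bernoulli_phi_div \<phi> (measure P A) (measure Q A) \<le> \<delta>"
proof -
  interpret P: prob_space P by (rule P)
  have "prob_space Q" and sQ: "sets Q = sets P"
    using Q by (auto simp: phi_ball_def)
  then interpret Q: prob_space Q by simp
  define Z where "Z = (\<lambda>\<omega>. enn2real (RN_deriv P Q \<omega>))"
  then have "\<And>\<omega>. enn2real (RN_deriv P Q \<omega>) = Z \<omega>"
    by simp
  note RN = phi_ball_RN_deriv[OF P \<phi> Q, unfolded this]
  define Ac where "Ac = space P - A"
  have Ac: "Ac \<in> sets P" "measure P Ac = 1 - measure P A" "measure Q Ac = 1 - measure Q A"
    using A(1) Q.prob_compl[of A] P.prob_compl[of A] sQ sets_eq_imp_space_eq[OF sQ]
    by (auto simp: Ac_def)
  note jensen = conditional_jensens_inequality[OF convex_on_phi_real[OF \<phi>] _ _ RN(1,3,4)]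
  note jensen_A = jensen[OF A(1,2), unfolded RN(2)[OF A(1)]]
  note jensen_Ac = jensen[OF Ac(1), unfolded RN(2)[OF Ac(1)] Ac(2,3)]
  show "measure Q A / measure P A \<in> phi_dom \<phi>"
    using jensen_A(1) .
  show "(1 - measure Q A) / (1 - measure P A) \<in> phi_dom \<phi>"
    using jensen_Ac(1) A(3) by simp
  have "(LINT \<omega>:A|P. phi_real \<phi> (Z \<omega>)) + (LINT \<omega>:Ac|P. phi_real \<phi> (Z \<omega>)) = (LINT \<omega>:A \<union> Ac|P. phi_real \<phi> (Z \<omega>))"
    using integrable_mult_indicator[OF A(1) RN(4)] integrable_mult_indicator[OF Ac(1) RN(4)]
    by (intro set_integral_Un[symmetric]) (auto simp: Ac_def set_integrable_def)
  also have "\<dots> = (\<integral>\<omega>. phi_real \<phi> (Z \<omega>) \<partial>P)"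
  proof -
    have "A \<union> Ac = space P"
      using sets.sets_into_space[OF A(1)] by (auto simp: Ac_def)
    then show ?thesis
      using RN(4) by (simp add: set_integral_space)
  qed
  finally have split: "(LINT \<omega>:A|P. phi_real \<phi> (Z \<omega>)) + (LINT \<omega>:Ac|P. phi_real \<phi> (Z \<omega>))
      = (\<integral>\<omega>. phi_real \<phi> (Z \<omega>) \<partial>P)" .
  show "bernoulli_phi_div \<phi> (measure P A) (measure Q A) \<le> \<delta>"
    using jensen_A(2) jensen_Ac(2) A(3) split RN(5) by (simp add: bernoulli_phi_div_def)
qed

lemma measure_le_g_phi:
  assumes P: "prob_space P" and \<phi>: "admissible_phi \<phi>" and Q: "Q \<in> phi_ball \<phi> P \<delta>" and \<delta>: "0 \<le> \<delta>"
    and A: "A \<in> sets P"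
  shows "measure Q A \<le> g_phi \<phi> \<delta> (measure P A)"
proof -
  interpret P: prob_space P by (rule P)
  have "prob_space Q" and ac: "absolutely_continuous P Q"
    using Q by (auto simp: phi_ball_def)
  then interpret Q: prob_space Q by simp
  consider "measure P A = 0" | "measure P A = 1" | "measure Q A \<le> measure P A"
    | "0 < measure P A" "measure P A < 1" "measure P A < measure Q A"
    using measure_nonneg[of P A] P.prob_le_1[of A] by (smt (verit))
  then show ?thesis
  proof cases
    case 1
    then have "A \<in> null_sets Q"
      using A ac by (auto simp: absolutely_continuous_def null_sets_def P.emeasure_eq_measure)
    then show ?thesis
      using 1 by (simp add: Q.emeasure_eq_measure null_sets_def)
  next
    case 2
    then show ?thesis by simp
  next
    case 3
    then show ?thesis
      using g_phi_bounds(1)[OF \<phi> \<delta>, of "measure P A"] by simp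
  next
    case 4
    then have "measure Q A \<in> g_phi_feasible \<phi> \<delta> (measure P A)"
      using phi_ball_bernoulli_phi_div_le[OF P \<phi> Q A] by (simp add: mem_g_phi_feasible_iff[OF \<phi>])
    then show ?thesis
      using le_g_phi 4 by simp
  qed
qed

section \<open>Distortion risk measures\<close>

definition survival :: "'a measure \<Rightarrow> ('a \<Rightarrow> real) \<Rightarrow> real \<Rightarrow> real" where
  "survival Q X x = measure Q {\<omega> \<in> space Q. X \<omega> > x}"

lemma distortion_risk_survival:
  "distortion_risk h Q X
     = (LINT x:{0..}|lborel. h (survival Q X x)) + (LINT x:{..0}|lborel. h (survival Q X x) - 1)"
  unfolding distortion_risk_def survival_def ..

lemma survival_antimono:
  assumes "finite_measure Q" and "X \<in> borel_measurable Q" and "x \<le> y"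
  shows "survival Q X y \<le> survival Q X x"
  unfolding survival_def using assms
  by (intro finite_measure.finite_measure_mono) (auto intro: less_le_trans)

lemma survival_in_unit_interval: "prob_space Q \<Longrightarrow> survival Q X x \<in> {0..1}"
  by (simp add: survival_def prob_space.prob_le_1)

lemma distorted_survival_bounds:
  assumes Q: "prob_space Q" and B: "\<forall>\<omega>\<in>space Q. \<bar>X \<omega>\<bar> \<le> B" and h: "distortion_fun h"
  shows "\<bar>indicator {0..} x * h (survival Q X x)\<bar> \<le> indicator {-B..B} x"
    and "\<bar>indicator {..0} x * (h (survival Q X x) - 1)\<bar> \<le> indicator {-B..B} x"
proof -
  interpret Q: prob_space Q by (rule Q)
  have B0: "0 \<le> B"
    using B Q.not_empty by force
  have h01: "0 \<le> h (survival Q X x)" "h (survival Q X x) \<le> 1"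
    using h survival_in_unit_interval[OF Q] by (auto simp: distortion_fun_def image_subset_iff)
  have above: "h (survival Q X x) = 0" if "B \<le> x"
  proof -
    have empty: "{\<omega> \<in> space Q. X \<omega> > x} = {}"
      using B that by force
    show ?thesis
      using h unfolding survival_def empty by (simp add: distortion_fun_def)
  qed
  have below: "h (survival Q X x) = 1" if "x < -B"
  proof -
    have full: "{\<omega> \<in> space Q. X \<omega> > x} = space Q"
      using B that by force
    show ?thesis
      using h unfolding survival_def full by (simp add: distortion_fun_def Q.prob_space)
  qed
  show "\<bar>indicator {0..} x * h (survival Q X x)\<bar> \<le> indicator {-B..B} x"
    using h01 above B0 by (cases "0 \<le> x"; cases "B \<le> x") (auto simp: indicator_def)
  show "\<bar>indicator {..0} x * (h (survival Q X x) - 1)\<bar> \<le> indicator {-B..B} x"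
    using h01 below B0 by (cases "x \<le> 0"; cases "x < -B") (auto simp: indicator_def)
qed

lemma borel_measurable_distorted_survival:
  assumes Q: "prob_space Q" and X: "X \<in> borel_measurable Q" and h: "distortion_fun h"
  shows "(\<lambda>x. h (survival Q X x)) \<in> borel_measurable borel"
proof -
  have "mono (\<lambda>x. - h (survival Q X x))"
  proof (rule monoI)
    fix x y :: real
    assume "x \<le> y"
    then show "- h (survival Q X x) \<le> - h (survival Q X y)"
      using h survival_antimono[OF prob_space.finite_measure[OF Q] X] survival_in_unit_interval[OF Q]
      by (auto simp: distortion_fun_def intro: mono_onD)
  qed
  then have "(\<lambda>x. - (- h (survival Q X x))) \<in> borel_measurable borel"
    by (intro borel_measurable_uminus borel_measurable_mono)
  then show ?thesis by simp
qed

lemma set_integrable_dominated_Icc: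
  fixes f :: "real \<Rightarrow> real"
  assumes f: "f \<in> borel_measurable borel" and S: "S \<in> sets borel"
    and bound: "\<And>x. \<bar>indicator S x * f x\<bar> \<le> indicator {a..b} x"
  shows "set_integrable lborel S f"
  unfolding set_integrable_def
proof (rule Bochner_Integration.integrable_bound)
  show "integrable lborel (indicator {a..b} :: real \<Rightarrow> real)"
    by (rule integrable_real_indicator) (auto simp: emeasure_lborel_Icc_eq)
  show "AE x in lborel. norm (indicator S x *\<^sub>R f x) \<le> norm (indicator {a..b} x :: real)"
    using bound by simp
qed (use f S in measurable)

lemma tendsto_set_integral_dominated_Icc:
  fixes F :: "nat \<Rightarrow> real \<Rightarrow> real"
  assumes F: "\<And>n. F n \<in> borel_measurable borel" and f: "f \<in> borel_measurable borel"
    and S: "S \<in> sets borel" and lim: "\<And>x. (\<lambda>n. F n x) \<longlonglongrightarrow> f x"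
    and bound: "\<And>n x. \<bar>indicator S x * F n x\<bar> \<le> indicator {a..b} x"
  shows "(\<lambda>n. LINT x:S|lborel. F n x) \<longlonglongrightarrow> (LINT x:S|lborel. f x)"
  unfolding set_lebesgue_integral_def
proof (rule integral_dominated_convergence[where w="indicator {a..b}"])
  show "integrable lborel (indicator {a..b} :: real \<Rightarrow> real)"
    by (rule integrable_real_indicator) (auto simp: emeasure_lborel_Icc_eq)
  show "AE x in lborel. (\<lambda>n. indicator S x *\<^sub>R F n x) \<longlonglongrightarrow> indicator S x *\<^sub>R f x"
    using lim by (intro AE_I2 tendsto_intros)
  show "AE x in lborel. norm (indicator S x *\<^sub>R F n x) \<le> indicator {a..b} x" for n
    using bound by simp
qed (use F f S in measurable)

lemma distortion_risk_integrable:
  assumes Q: "prob_space Q" and X: "X \<in> borel_measurable Q" and B: "\<forall>\<omega>\<in>space Q. \<bar>X \<omega>\<bar> \<le> B"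
    and h: "distortion_fun h"
  shows "set_integrable lborel {0..} (\<lambda>x. h (survival Q X x))"
    and "set_integrable lborel {..0} (\<lambda>x. h (survival Q X x) - 1)"
  using borel_measurable_distorted_survival[OF Q X h]
  by (auto intro!: set_integrable_dominated_Icc distorted_survival_bounds[OF Q B h])

lemma distortion_risk_mono:
  assumes Q: "prob_space Q" and P: "prob_space P" and sets_eq: "sets Q = sets P"
    and X: "X \<in> borel_measurable P" and B: "\<forall>\<omega>\<in>space P. \<bar>X \<omega>\<bar> \<le> B"
    and h1: "distortion_fun h1" and h2: "distortion_fun h2"
    and le: "\<And>x. h1 (survival Q X x) \<le> h2 (survival P X x)"
  shows "distortion_risk h1 Q X \<le> distortion_risk h2 P X"
proof -
  have "X \<in> borel_measurable Q" and "\<forall>\<omega>\<in>space Q. \<bar>X \<omega>\<bar> \<le> B"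
    using X B measurable_cong_sets[OF sets_eq refl] sets_eq_imp_space_eq[OF sets_eq] by auto
  note int1 = distortion_risk_integrable[OF Q this h1] and int2 = distortion_risk_integrable[OF P X B h2]
  show ?thesis
    unfolding distortion_risk_survival
    using le by (intro add_mono set_integral_mono int1 int2) auto
qed

lemma distortion_risk_tendsto:
  fixes h :: "real \<Rightarrow> real \<Rightarrow> real"
  assumes P: "prob_space P" and X: "X \<in> borel_measurable P" and B: "\<forall>\<omega>\<in>space P. \<bar>X \<omega>\<bar> \<le> B"
    and h: "\<And>d. 0 < d \<Longrightarrow> distortion_fun (h d)" and h0: "distortion_fun h0"
    and lim: "\<And>y. y \<in> {0..1} \<Longrightarrow> ((\<lambda>d. h d y) \<longlongrightarrow> h0 y) (at_right 0)"
  shows "((\<lambda>d. distortion_risk (h d) P X) \<longlongrightarrow> distortion_risk h0 P X) (at_right 0)"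
proof (rule tendsto_at_right_sequentially[of 0 1])
  fix s :: "nat \<Rightarrow> real"
  assume s0: "\<And>n. 0 < s n" and "s \<longlonglongrightarrow> 0"
  then have "filterlim s (at_right 0) sequentially"
    by (intro tendsto_imp_filterlim_at_right) auto
  then have pointwise: "(\<lambda>n. h (s n) (survival P X x)) \<longlonglongrightarrow> h0 (survival P X x)" for x
    by (rule filterlim_compose[OF lim[OF survival_in_unit_interval[OF P]]])
  note measurable = borel_measurable_distorted_survival[OF P X]
  note bounds = distorted_survival_bounds[OF P B]
  have "(\<lambda>n. LINT x:{0..}|lborel. h (s n) (survival P X x)) \<longlonglongrightarrow> (LINT x:{0..}|lborel. h0 (survival P X x))"
    using pointwise measurable h[OF s0] h0 bounds(1)[OF h[OF s0]]
    by (intro tendsto_set_integral_dominated_Icc) auto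
  moreover have "(\<lambda>n. LINT x:{..0}|lborel. h (s n) (survival P X x) - 1)
      \<longlonglongrightarrow> (LINT x:{..0}|lborel. h0 (survival P X x) - 1)"
    using pointwise measurable h[OF s0] h0 bounds(2)[OF h[OF s0]]
    by (intro tendsto_set_integral_dominated_Icc tendsto_diff) auto
  ultimately show "(\<lambda>n. distortion_risk (h (s n)) P X) \<longlonglongrightarrow> distortion_risk h0 P X"
    unfolding distortion_risk_survival by (rule tendsto_add)
qed simp

section \<open>Robust distortion risk over the divergence ball\<close>

lemma distortion_risk_le_g_phi:
  assumes P: "prob_space P" and g: "distortion_fun g" and \<phi>: "admissible_phi \<phi>" and \<delta>: "0 \<le> \<delta>"
    and X: "X \<in> borel_measurable P" and B: "\<forall>\<omega>\<in>space P. \<bar>X \<omega>\<bar> \<le> B"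
    and Q: "Q \<in> phi_ball \<phi> P \<delta>"
  shows "distortion_risk g Q X \<le> distortion_risk (g \<circ> g_phi \<phi> \<delta>) P X"
proof -
  have Qp: "prob_space Q" and sets_eq: "sets Q = sets P"
    using Q by (auto simp: phi_ball_def)
  show ?thesis
  proof (rule distortion_risk_mono[OF Qp P sets_eq X B g distortion_fun_comp[OF g distortion_fun_g_phi[OF \<phi> \<delta>]]])
    fix x
    have "{\<omega> \<in> space P. X \<omega> > x} \<in> sets P"
      using X by measurable
    then have "survival Q X x \<le> g_phi \<phi> \<delta> (survival P X x)"
      using measure_le_g_phi[OF P \<phi> Q \<delta>] sets_eq_imp_space_eq[OF sets_eq] by (simp add: survival_def)
    moreover have "g_phi \<phi> \<delta> (survival P X x) \<in> {0..1}"
      using distortion_fun_g_phi[OF \<phi> \<delta>] survival_in_unit_interval[OF P]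
      by (auto simp: distortion_fun_def image_subset_iff)
    ultimately show "g (survival Q X x) \<le> (g \<circ> g_phi \<phi> \<delta>) (survival P X x)"
      using g survival_in_unit_interval[OF Qp] by (auto simp: distortion_fun_def intro: mono_onD)
  qed
qed

lemma distortion_risk_SUP_phi_ball:
  assumes P: "prob_space P" and g: "distortion_fun g" and \<phi>: "admissible_phi \<phi>" and \<delta>: "0 \<le> \<delta>"
    and X: "X \<in> borel_measurable P" and B: "\<forall>\<omega>\<in>space P. \<bar>X \<omega>\<bar> \<le> B"
  shows "distortion_risk g P X \<le> (SUP Q \<in> phi_ball \<phi> P \<delta>. distortion_risk g Q X)"
    and "(SUP Q \<in> phi_ball \<phi> P \<delta>. distortion_risk g Q X) \<le> distortion_risk (g \<circ> g_phi \<phi> \<delta>) P X"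
  using self_in_phi_ball[OF P \<phi> \<delta>] distortion_risk_le_g_phi[OF P g \<phi> \<delta> X B]
  by (auto intro!: cSUP_upper cSUP_least bdd_aboveI2)

theorem mainTheorem7:
  fixes P :: "'a measure" and g :: "real \<Rightarrow> real" and \<phi> :: "real \<Rightarrow> ereal"
    and \<delta> :: real and X :: "'a \<Rightarrow> real"
  assumes P: "prob_space P"
    and g: "distortion_fun g"
    and \<delta>: "\<delta> > 0"
    and \<phi>: "admissible_phi \<phi>"
    and X: "X \<in> borel_measurable P" "\<exists>B. \<forall>\<omega>\<in>space P. \<bar>X \<omega>\<bar> \<le> B"
  shows "(SUP Q \<in> phi_ball \<phi> P \<delta>. distortion_risk g Q X) \<le> distortion_risk (g \<circ> g_phi \<phi> \<delta>) P X
       \<and> ((\<forall>x\<ge>0. \<phi> x \<noteq> \<infinity>) \<and> strictly_convex_ereal_nonneg \<phi>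
         \<and> ((\<lambda>x. \<phi> x / ereal x) \<longlongrightarrow> \<infinity>) at_top
         \<and> (\<forall>x\<in>{0..<1}. continuous (at_right x) g) \<longrightarrow>
         ((\<lambda>d. SUP Q \<in> phi_ball \<phi> P d. distortion_risk g Q X) \<longlongrightarrow> distortion_risk g P X) (at_right 0)
       \<and> ((\<lambda>d. distortion_risk (g \<circ> g_phi \<phi> d) P X) \<longlongrightarrow> distortion_risk g P X) (at_right 0))"
proof -
  obtain B where B: "\<forall>\<omega>\<in>space P. \<bar>X \<omega>\<bar> \<le> B"
    using X(2) by blast
  note bounds = distortion_risk_SUP_phi_ball[OF P g \<phi> _ X(1) B]
  have limits: "((\<lambda>d. SUP Q \<in> phi_ball \<phi> P d. distortion_risk g Q X) \<longlongrightarrow> distortion_risk g P X) (at_right 0)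
      \<and> ((\<lambda>d. distortion_risk (g \<circ> g_phi \<phi> d) P X) \<longlongrightarrow> distortion_risk g P X) (at_right 0)"
    if fin: "\<forall>x\<ge>0. \<phi> x \<noteq> \<infinity>" and sc: "strictly_convex_ereal_nonneg \<phi>"
      and rc: "\<forall>x\<in>{0..<1}. continuous (at_right x) g"
  proof
    show upper: "((\<lambda>d. distortion_risk (g \<circ> g_phi \<phi> d) P X) \<longlongrightarrow> distortion_risk g P X) (at_right 0)"
      using distortion_fun_comp[OF g distortion_fun_g_phi[OF \<phi>]] comp_g_phi_tendsto[OF \<phi> fin sc rc]
      by (intro distortion_risk_tendsto[OF P X(1) B _ g]) auto
    show "((\<lambda>d. SUP Q \<in> phi_ball \<phi> P d. distortion_risk g Q X) \<longlongrightarrow> distortion_risk g P X) (at_right 0)"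
      using eventually_at_right_less[of 0] eventually_at_right_less[of 0]
      by (intro tendsto_sandwich[OF _ _ tendsto_const upper]; eventually_elim) (simp_all add: bounds)
  qed
  show ?thesis
    using bounds(2)[OF less_imp_le[OF \<delta>]] limits by blast
qed

end
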